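(* Let $\Gamma\subsetneqq\mathbb{R}^n$ be an open convex cone with vertex at the origin such that $\{\lambda:\lambda_i>0\ \forall i\}\subset\Gamma\subset\{\lambda:\sum_i\lambda_i>0\}$, and let $f$ be a smooth symmetric function on $\Gamma$ with $\frac{\partial f}{\partial\lambda_i}>0$ in $\Gamma$ for all $i$, $f(a^*(1,\dots,1))=1$ for some $a^*>0$, and $\limsup_{\lambda\to\lambda_0}f(\lambda)<1$ for every $\lambda_0\in\partial\Gamma$. Let $A=\mathrm{diag}(a_1,\dots,a_n)\in\mathcal{A}$ with $0<a_1\leq\cdots\leq a_n$ and $\frac{\partial f}{\partial\lambda_1}(\lambda(A))=\max_i\frac{\partial f}{\partial\lambda_i}(\lambda(A))$. Let $g:[1,\infty)\to\mathbb{R}$ be the unique smooth function with $(g(w),a_2w,\dots,a_nw)\in\Gamma$ and $f(g(w),a_2w,\dots,a_nw)=1$ for $w\geq1$. Let $c_2>1$, let $\delta\geq0$ be such that $$\alpha_\delta=\frac{\sum_{i=1}^na_i\frac{\partial f}{\partial\lambda_i}(\lambda(A))}{(2a_n+\delta)\frac{\partial f}{\partial\lambda_1}(\lambda(A))}>1,$$ and let $w_{c_2,\delta}(s)$ be a solution on $[1,+\infty)$ of $$\frac{dw}{ds}=\frac{g(w)-a_1w}{(2a_n+\delta)s},\qquad w(1)=c_2.$$ Then $\lim_{s\to+\infty}w_{c_2,\delta}(s)=1$ and $w_{c_2,\delta}(s)-1=O(s^{-\alpha_\delta})$ as $s\to+\infty$.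
   Context: $S^+(n)$ is the set of real symmetric positive definite $n\times n$ matrices; for $A\in S^+(n)$, $a=\lambda(A)$ denotes its eigenvalues, $\hat a=\max_ia_i$, $\hat f_\lambda(a)=\max_i\frac{\partial f}{\partial\lambda_i}(a)$, and $\mathcal{A}:=\{A\in S^+(n): f(a)=1,\ \frac{\nabla f(a)\cdot a}{2\hat a\hat f_\lambda(a)}>1\}$. *)

theory Defs
  imports "HOL-Analysis.Analysis" "HOL-Library.Landau_Symbols"
begin

text \<open>Vectors in R^n are \<open>real ^ 'n\<close> with a finite, well-ordered index type;
  the order on 'n gives the labelling lambda_1, ..., lambda_n.\<close>

definition first_idx :: "'n::{finite,wellorder}" where
  "first_idx = (LEAST i. True)"

definition last_idx :: "'n::{finite,wellorder}" where
  "last_idx = (GREATEST i. True)"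

definition pdiff :: "(real ^ 'n \<Rightarrow> real) \<Rightarrow> 'n::finite \<Rightarrow> real ^ 'n \<Rightarrow> real" where
  "pdiff f i x = deriv (\<lambda>t. f (x + t *\<^sub>R axis i 1)) 0"

text \<open>C^infinity on an open set S: all iterated partial derivatives exist and are continuous
  (D ks is the iterated partial derivative along the index list ks, innermost last).\<close>
definition smooth_on :: "(real ^ 'n::finite) set \<Rightarrow> (real ^ 'n \<Rightarrow> real) \<Rightarrow> bool" where
  "smooth_on S f \<longleftrightarrow> (\<exists>D :: 'n list \<Rightarrow> real ^ 'n \<Rightarrow> real.
      D [] = f \<and>
      (\<forall>ks. continuous_on S (D ks)) \<and>
      (\<forall>ks i. \<forall>x\<in>S. ((\<lambda>t. D ks (x + t *\<^sub>R axis i 1)) has_real_derivative D (i # ks) x) (at 0)))"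

definition smooth_real_on :: "real set \<Rightarrow> (real \<Rightarrow> real) \<Rightarrow> bool" where
  "smooth_real_on S g \<longleftrightarrow> (\<exists>D :: nat \<Rightarrow> real \<Rightarrow> real.
      D 0 = g \<and> (\<forall>k. \<forall>x\<in>S. (D k has_real_derivative D (Suc k) x) (at x within S)))"

definition permute_vec :: "('n::finite \<Rightarrow> 'n) \<Rightarrow> real ^ 'n \<Rightarrow> real ^ 'n" where
  "permute_vec \<sigma> x = (\<chi> i. x $ \<sigma> i)"

text \<open>The set \<A>, restricted to diagonal matrices diag(a): since lambda(diag a) = a,
  membership is expressed on the eigenvalue vector a.\<close>
definition in_calA :: "(real ^ 'n::finite \<Rightarrow> real) \<Rightarrow> real ^ 'n \<Rightarrow> bool" where
  "in_calA f a \<longleftrightarrow> (\<forall>i. a $ i > 0) \<and> f a = 1 \<and>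
     (\<Sum>i\<in>UNIV. pdiff f i a * a $ i) /
       (2 * Max (range (\<lambda>i. a $ i)) * Max (range (\<lambda>i. pdiff f i a))) > 1"

end

theory Submission
  imports Defs
begin

text \<open>With \<open>h v = g v - a\<^sub>1 v\<close> and \<open>B = 2 a\<^sub>n + \<delta>\<close> the equation reads \<open>w' = h w / (B s)\<close>.
  Since \<open>f\<close> is strictly increasing in every coordinate and \<open>f a = 1\<close>, the level curve
  \<open>(g v, a\<^sub>2 v, \<dots>, a\<^sub>n v)\<close> passes through \<open>a\<close> at \<open>v = 1\<close> and lies below the ray \<open>v a\<close>
  for \<open>v > 1\<close>: thus \<open>h 1 = 0\<close> and \<open>h < 0\<close> on \<open>(1, \<infinity>)\<close>, and \<open>w\<close> decreases to \<open>1\<close>.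
  Differentiating \<open>f\<close> along the level curve at \<open>a\<close> gives
  \<open>h' 1 = - (\<Sum>i. a\<^sub>i f\<^sub>i) / f\<^sub>1 = - \<alpha> B\<close>, so by Taylor \<open>h (1 + u) \<le> - \<alpha> B u + M u\<^sup>2\<close>.
  Hence \<open>w - 1\<close> is a subsolution of the logistic equation \<open>u' = - \<alpha> u (1 - k u) / s\<close>, whose
  solutions decay like \<open>s powr - \<alpha>\<close>.\<close>

lemma mvt_linearization_bound:
  fixes \<phi> \<phi>' :: "real \<Rightarrow> real"
  assumes der: "\<And>t. min 0 c \<le> t \<Longrightarrow> t \<le> max 0 c \<Longrightarrow> (\<phi> has_real_derivative \<phi>' t) (at t)"
    and close: "\<And>t. min 0 c \<le> t \<Longrightarrow> t \<le> max 0 c \<Longrightarrow> \<bar>\<phi>' t - L\<bar> \<le> e"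
  shows "\<bar>\<phi> c - \<phi> 0 - c * L\<bar> \<le> e * \<bar>c\<bar>"
proof -
  obtain z where z: "min 0 c \<le> z" "z \<le> max 0 c" "\<phi> c - \<phi> 0 = c * \<phi>' z"
  proof (cases c "0::real" rule: linorder_cases)
    case less
    then obtain z where "c < z" "z < 0" "\<phi> 0 - \<phi> c = (0 - c) * \<phi>' z"
      using MVT2[of c 0 \<phi> \<phi>'] der by auto
    with less that[of z] show ?thesis by (simp add: algebra_simps)
  next
    case greater
    then obtain z where "0 < z" "z < c" "\<phi> c - \<phi> 0 = (c - 0) * \<phi>' z"
      using MVT2[of 0 c \<phi> \<phi>'] der by auto
    with greater that[of z] show ?thesis by simp
  qed (use that in auto)
  have "\<bar>\<phi> c - \<phi> 0 - c * L\<bar> = \<bar>c\<bar> * \<bar>\<phi>' z - L\<bar>"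
    by (simp add: z(3) abs_mult flip: right_diff_distrib)
  also have "\<dots> \<le> e * \<bar>c\<bar>"
    using close[OF z(1,2)] by (metis abs_ge_zero mult.commute mult_right_mono)
  finally show ?thesis .
qed

lemma coordinate_increment_bound:
  fixes f :: "real^'n::finite \<Rightarrow> real" and P :: "'n \<Rightarrow> real^'n \<Rightarrow> real"
  assumes der: "\<And>y. y \<in> S \<Longrightarrow> ((\<lambda>t. f (y + t *\<^sub>R axis j 1)) has_real_derivative P j y) (at 0)"
    and close: "\<And>y. y \<in> S \<Longrightarrow> \<bar>P j y - L\<bar> \<le> e"
    and segment: "\<And>t. \<bar>t\<bar> \<le> \<bar>c\<bar> \<Longrightarrow> y + t *\<^sub>R axis j 1 \<in> S"
  shows "\<bar>f (y + c *\<^sub>R axis j 1) - f y - c * L\<bar> \<le> e * \<bar>c\<bar>"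
proof -
  define \<phi> where "\<phi> t = f (y + t *\<^sub>R axis j 1)" for t
  have "\<bar>\<phi> c - \<phi> 0 - c * L\<bar> \<le> e * \<bar>c\<bar>"
  proof (rule mvt_linearization_bound[where \<phi>' = "\<lambda>t. P j (y + t *\<^sub>R axis j 1)"])
    fix t assume "min 0 c \<le> t" "t \<le> max 0 c"
    then have t: "y + t *\<^sub>R axis j 1 \<in> S" using segment by auto
    then show "\<bar>P j (y + t *\<^sub>R axis j 1) - L\<bar> \<le> e" by (rule close)
    have "((\<lambda>s. \<phi> (s + t)) has_real_derivative P j (y + t *\<^sub>R axis j 1)) (at 0)"
      using der[OF t] by (simp add: \<phi>_def scaleR_add_left add_ac)
    then show "(\<phi> has_real_derivative P j (y + t *\<^sub>R axis j 1)) (at t)"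
      using DERIV_shift[of \<phi> _ 0 t] by simp
  qed
  then show ?thesis by (simp add: \<phi>_def)
qed

lemma increment_bound_from_partials:
  fixes f :: "real^'n::finite \<Rightarrow> real" and P :: "'n \<Rightarrow> real^'n \<Rightarrow> real"
  assumes der: "\<And>i y. y \<in> ball x d \<Longrightarrow> ((\<lambda>t. f (y + t *\<^sub>R axis i 1)) has_real_derivative P i y) (at 0)"
    and close: "\<And>i y. y \<in> ball x d \<Longrightarrow> \<bar>P i y - P i x\<bar> \<le> e"
    and h: "norm h < d"
  shows "\<bar>f (x + h) - f x - (\<Sum>i\<in>UNIV. h$i * P i x)\<bar> \<le> e * (\<Sum>i\<in>UNIV. \<bar>h$i\<bar>)"
proof -
  have "\<forall>h. (\<forall>i. i \<notin> T \<longrightarrow> h$i = 0) \<longrightarrow> norm h < d \<longrightarrow>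
     \<bar>f (x + h) - f x - (\<Sum>i\<in>T. h$i * P i x)\<bar> \<le> e * (\<Sum>i\<in>T. \<bar>h$i\<bar>)" for T
  proof (induction T rule: infinite_finite_induct)
    case (infinite T)
    then show ?case by simp
  next
    case empty
    have "h = 0" if "\<forall>i. h$i = 0" for h :: "real^'n"
      using that by (simp add: vec_eq_iff)
    then show ?case by force
  next
    case (insert j T)
    show ?case
    proof (intro allI impI)
      fix h :: "real^'n"
      assume supp: "\<forall>i. i \<notin> insert j T \<longrightarrow> h$i = 0" and nh: "norm h < d"
      define h' where "h' = (\<chi> i. if i = j then 0 else h$i)"
      have h_split: "h = h' + h$j *\<^sub>R axis j 1"
        by (simp add: h'_def vec_eq_iff axis_def)
      have in_ball: "x + h' + t *\<^sub>R axis j 1 \<in> ball x d" if "\<bar>t\<bar> \<le> \<bar>h$j\<bar>" for t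
      proof -
        have "norm (h' + t *\<^sub>R axis j 1) \<le> norm h"
          by (rule norm_le_componentwise_cart) (use that in \<open>auto simp: h'_def axis_def\<close>)
        moreover have "dist x (x + h' + t *\<^sub>R axis j 1) = norm (h' + t *\<^sub>R axis j 1)"
          by (metis add.assoc add_diff_cancel_left' dist_norm norm_minus_commute)
        ultimately show ?thesis using nh by simp
      qed
      have IH: "\<bar>f (x + h') - f x - (\<Sum>i\<in>T. h$i * P i x)\<bar> \<le> e * (\<Sum>i\<in>T. \<bar>h$i\<bar>)"
      proof -
        have "norm h' < d" using in_ball[of 0] by (simp add: dist_norm)
        moreover have "\<forall>i. i \<notin> T \<longrightarrow> h'$i = 0" using supp by (simp add: h'_def)
        ultimately have "\<bar>f (x + h') - f x - (\<Sum>i\<in>T. h'$i * P i x)\<bar> \<le> e * (\<Sum>i\<in>T. \<bar>h'$i\<bar>)"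
          using insert.IH by blast
        moreover have "(\<Sum>i\<in>T. h'$i * P i x) = (\<Sum>i\<in>T. h$i * P i x)"
          "(\<Sum>i\<in>T. \<bar>h'$i\<bar>) = (\<Sum>i\<in>T. \<bar>h$i\<bar>)"
          using insert.hyps by (auto intro!: sum.cong simp: h'_def)
        ultimately show ?thesis by simp
      qed
      have "\<bar>f (x + h' + h$j *\<^sub>R axis j 1) - f (x + h') - h$j * P j x\<bar> \<le> e * \<bar>h$j\<bar>"
        by (rule coordinate_increment_bound[where S = "ball x d"]) (use der close in_ball in auto)
      then have step: "\<bar>f (x + h) - f (x + h') - h$j * P j x\<bar> \<le> e * \<bar>h$j\<bar>"
        by (simp add: add.assoc flip: h_split)
      show "\<bar>f (x + h) - f x - (\<Sum>i\<in>insert j T. h$i * P i x)\<bar> \<le> e * (\<Sum>i\<in>insert j T. \<bar>h$i\<bar>)"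
      proof -
        have "f (x + h) - f x - (\<Sum>i\<in>insert j T. h$i * P i x)
            = (f (x + h) - f (x + h') - h$j * P j x) + (f (x + h') - f x - (\<Sum>i\<in>T. h$i * P i x))"
          using insert.hyps by simp
        then show ?thesis
          using step IH abs_triangle_ineq insert.hyps by (simp add: distrib_left)
      qed
    qed
  qed
  from this[of UNIV] h show ?thesis by simp
qed

lemma has_derivative_if_continuous_partials:
  fixes f :: "real^'n::finite \<Rightarrow> real" and P :: "'n \<Rightarrow> real^'n \<Rightarrow> real"
  assumes S: "open S" "x \<in> S"
    and cont: "\<And>i. continuous_on S (P i)"
    and der: "\<And>i y. y \<in> S \<Longrightarrow> ((\<lambda>t. f (y + t *\<^sub>R axis i 1)) has_real_derivative P i y) (at 0)"
  shows "(f has_derivative (\<lambda>h. \<Sum>i\<in>UNIV. h$i * P i x)) (at x)"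
  unfolding has_derivative_at_alt
proof (intro conjI allI impI)
  show "bounded_linear (\<lambda>h. \<Sum>i\<in>UNIV. h$i * P i x)"
    unfolding linear_conv_bounded_linear[symmetric]
    by (rule linearI) (auto simp: sum.distrib sum_distrib_left algebra_simps)
next
  fix e :: real assume "e > 0"
  define e' where "e' = e / real CARD('n)"
  have "e' > 0" using \<open>e > 0\<close> by (simp add: e'_def)
  have "\<forall>\<^sub>F y in at x. y \<in> S \<and> (\<forall>i. dist (P i y) (P i x) < e')"
  proof (intro eventually_conj eventually_all_finite)
    show "\<forall>\<^sub>F y in at x. y \<in> S"
      using S eventually_at_topological by blast
    fix i
    have "isCont (P i) x"
      using cont S continuous_on_eq_continuous_at by blast
    then show "\<forall>\<^sub>F y in at x. dist (P i y) (P i x) < e'"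
      using \<open>e' > 0\<close> unfolding isCont_def tendsto_iff by blast
  qed
  then obtain d where "d > 0"
    and d: "\<And>y. 0 < dist y x \<Longrightarrow> dist y x < d \<Longrightarrow> y \<in> S \<and> (\<forall>i. dist (P i y) (P i x) < e')"
    unfolding eventually_at by auto
  have ball: "y \<in> S \<and> \<bar>P i y - P i x\<bar> \<le> e'" if "y \<in> ball x d" for i y
  proof (cases "y = x")
    case False
    then show ?thesis
      using d[of y] that by (auto simp: dist_commute dist_real_def abs_minus_commute less_imp_le)
  qed (use S \<open>e' > 0\<close> in auto)
  show "\<exists>d>0. \<forall>y. norm (y - x) < d \<longrightarrow>
          norm (f y - f x - (\<Sum>i\<in>UNIV. (y - x)$i * P i x)) \<le> e * norm (y - x)"
  proof (intro exI[of _ d] conjI allI impI)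
    fix y assume y: "norm (y - x) < d"
    have "\<bar>f (x + (y - x)) - f x - (\<Sum>i\<in>UNIV. (y - x)$i * P i x)\<bar> \<le> e' * (\<Sum>i\<in>UNIV. \<bar>(y - x)$i\<bar>)"
      by (rule increment_bound_from_partials[OF der _ y]) (use ball in auto)
    also have "\<dots> \<le> e' * (\<Sum>i\<in>(UNIV::'n set). norm (y - x))"
      using \<open>e' > 0\<close> by (meson component_le_norm_cart less_imp_le mult_left_mono sum_mono)
    also have "\<dots> = e * norm (y - x)" by (simp add: e'_def)
    finally show "norm (f y - f x - (\<Sum>i\<in>UNIV. (y - x)$i * P i x)) \<le> e * norm (y - x)" by simp
  qed fact
qed

lemma smooth_on_has_derivative:
  fixes f :: "real^'n::finite \<Rightarrow> real"
  assumes "open S" "smooth_on S f" "x \<in> S"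
  shows "(f has_derivative (\<lambda>h. \<Sum>i\<in>UNIV. h$i * pdiff f i x)) (at x)"
proof -
  obtain D where D: "D [] = f" "\<And>ks. continuous_on S (D ks)"
    "\<And>ks i y. y \<in> S \<Longrightarrow> ((\<lambda>t. D ks (y + t *\<^sub>R axis i 1)) has_real_derivative D (i # ks) y) (at 0)"
    using assms(2) unfolding smooth_on_def by blast
  have der: "((\<lambda>t. f (y + t *\<^sub>R axis i 1)) has_real_derivative D [i] y) (at 0)" if "y \<in> S" for i y
    using D(3)[OF that, of "[]" i] D(1) by simp
  have "pdiff f i x = D [i] x" for i
    unfolding pdiff_def using DERIV_imp_deriv[OF der[OF assms(3)]] .
  with has_derivative_if_continuous_partials[OF assms(1,3) D(2) der] show ?thesis by simp
qed

lemma mean_value_partials_convex: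
  fixes f :: "real^'n::finite \<Rightarrow> real" and P :: "'n \<Rightarrow> real^'n \<Rightarrow> real"
  assumes "convex S"
    and der: "\<And>z. z \<in> S \<Longrightarrow> (f has_derivative (\<lambda>h. \<Sum>i\<in>UNIV. h$i * P i z)) (at z)"
    and "x \<in> S" "y \<in> S"
  obtains z where "z \<in> S" "f y - f x = (\<Sum>i\<in>UNIV. (y - x)$i * P i z)"
proof -
  have seg: "x + t *\<^sub>R (y - x) \<in> S" if "0 \<le> t" "t \<le> 1" for t
    using convexD_alt[OF \<open>convex S\<close> \<open>x \<in> S\<close> \<open>y \<in> S\<close> that] by (simp add: algebra_simps)
  have "((\<lambda>t. f (x + t *\<^sub>R (y - x))) has_real_derivative (\<Sum>i\<in>UNIV. (y - x)$i * P i (x + t *\<^sub>R (y - x)))) (at t)"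
    if "0 \<le> t" "t \<le> 1" for t
  proof -
    have "((\<lambda>t. x + t *\<^sub>R (y - x)) has_derivative (\<lambda>t. t *\<^sub>R (y - x))) (at t)"
      by (auto intro!: derivative_eq_intros)
    from has_derivative_compose[OF this der[OF seg[OF that]]] show ?thesis
      unfolding has_field_derivative_def
      by (rule has_derivative_eq_rhs) (auto simp: fun_eq_iff sum_distrib_left mult_ac)
  qed
  from MVT2[OF zero_less_one this] obtain t where "0 < t" "t < 1"
    "f (x + 1 *\<^sub>R (y - x)) - f (x + 0 *\<^sub>R (y - x)) = (1 - 0) * (\<Sum>i\<in>UNIV. (y - x)$i * P i (x + t *\<^sub>R (y - x)))"
    by blast
  with seg[of t] that show ?thesis by auto
qed

lemma strict_mono_if_positive_partials:
  fixes f :: "real^'n::finite \<Rightarrow> real" and P :: "'n \<Rightarrow> real^'n \<Rightarrow> real"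
  assumes "convex S"
    and der: "\<And>z. z \<in> S \<Longrightarrow> (f has_derivative (\<lambda>h. \<Sum>i\<in>UNIV. h$i * P i z)) (at z)"
    and pos: "\<And>z i. z \<in> S \<Longrightarrow> P i z > 0"
    and "x \<in> S" "y \<in> S" "\<And>i. x$i \<le> y$i" "x \<noteq> y"
  shows "f x < f y"
proof -
  obtain z where "z \<in> S" and z: "f y - f x = (\<Sum>i\<in>UNIV. (y - x)$i * P i z)"
    using mean_value_partials_convex[OF \<open>convex S\<close> der \<open>x \<in> S\<close> \<open>y \<in> S\<close>] by blast
  obtain k where "x$k \<noteq> y$k" using \<open>x \<noteq> y\<close> by (auto simp: vec_eq_iff)
  have "0 \<le> (y - x)$i * P i z" for i
    using assms(6)[of i] pos[OF \<open>z \<in> S\<close>, of i] by simp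
  moreover have "0 < (y - x)$k * P k z"
    using \<open>x$k \<noteq> y$k\<close> assms(6)[of k] pos[OF \<open>z \<in> S\<close>, of k] by simp
  ultimately have "0 < (\<Sum>i\<in>UNIV. (y - x)$i * P i z)"
    by (intro sum_pos2[of _ k]) auto
  with z show ?thesis by simp
qed

lemma level_curve_below_ray:
  fixes f :: "real^'n::finite \<Rightarrow> real" and P :: "'n \<Rightarrow> real^'n \<Rightarrow> real"
    and g :: "real \<Rightarrow> real"
  assumes "convex S"
    and der: "\<And>z. z \<in> S \<Longrightarrow> (f has_derivative (\<lambda>h. \<Sum>i\<in>UNIV. h$i * P i z)) (at z)"
    and pos: "\<And>z i. z \<in> S \<Longrightarrow> P i z > 0"
    and a_pos: "\<And>i. a$i > 0"
    and ray: "\<And>v. v \<ge> 1 \<Longrightarrow> v *\<^sub>R a \<in> S"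
    and curve: "\<And>v. v \<ge> 1 \<Longrightarrow> (\<chi> i. if i = j then g v else a$i * v) \<in> S"
    and level: "\<And>v. v \<ge> 1 \<Longrightarrow> f (\<chi> i. if i = j then g v else a$i * v) = f a"
  shows "g 1 = a$j" and "\<And>v. v > 1 \<Longrightarrow> g v < a$j * v"
proof -
  let ?X = "\<lambda>v. \<chi> i. if i = j then g v else a$i * v"
  note mono = strict_mono_if_positive_partials[OF \<open>convex S\<close> der pos]
  have "a \<in> S" using ray[of 1] by simp
  show "g 1 = a$j"
  proof (rule ccontr)
    assume "g 1 \<noteq> a$j"
    then consider "g 1 < a$j" | "g 1 > a$j" by linarith
    then show False
    proof cases
      case 1
      then have "f (?X 1) < f a"
        by (intro mono curve \<open>a \<in> S\<close>) (auto simp: vec_eq_iff)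
      with level[of 1] show False by simp
    next
      case 2
      then have "f a < f (?X 1)"
        by (intro mono curve \<open>a \<in> S\<close>) (auto simp: vec_eq_iff)
      with level[of 1] show False by simp
    qed
  qed
  show "g v < a$j * v" if "v > 1" for v
  proof (rule ccontr)
    assume "\<not> g v < a$j * v"
    then have "v *\<^sub>R a = ?X v \<or> f (v *\<^sub>R a) < f (?X v)"
      using that by (auto intro!: mono ray curve simp: mult.commute)
    then have "f (v *\<^sub>R a) \<le> f a"
      using level[of v] that by auto
    moreover have "f a < f (v *\<^sub>R a)"
      using that a_pos by (intro mono ray \<open>a \<in> S\<close>) (auto simp: vec_eq_iff less_imp_neq[symmetric])
    ultimately show False by simp
  qed
qed

lemma level_curve_tangent:
  fixes f :: "real^'n::finite \<Rightarrow> real" and P :: "'n \<Rightarrow> real" and g :: "real \<Rightarrow> real"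
  assumes der: "(f has_derivative (\<lambda>h. \<Sum>i\<in>UNIV. h$i * P i)) (at a)"
    and "g 1 = a$j"
    and g': "(g has_real_derivative g') (at 1 within {1..})"
    and level: "\<And>v. v \<ge> 1 \<Longrightarrow> f (\<chi> i. if i = j then g v else a$i * v) = f a"
  shows "(\<Sum>i\<in>UNIV. a$i * P i) + (g' - a$j) * P j = 0"
proof -
  define X where "X v = v *\<^sub>R a + (g v - a$j * v) *\<^sub>R axis j 1" for v
  have "(\<chi> i. if i = j then g v else a$i * v) = X v" for v
    by (auto simp: vec_eq_iff X_def axis_def)
  then have fX: "f (X v) = f a" if "v \<ge> 1" for v
    using level[OF that] by simp
  have "X 1 = a" using \<open>g 1 = a$j\<close> by (simp add: X_def)
  have "(X has_vector_derivative a + (g' - a$j) *\<^sub>R axis j 1) (at 1 within {1..})"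
    unfolding X_def using g' by (auto intro!: derivative_eq_intros)
  moreover have "(f has_derivative (\<lambda>h. \<Sum>i\<in>UNIV. h$i * P i)) (at (X 1) within X ` {1..})"
    using der \<open>X 1 = a\<close> by (auto intro: has_derivative_subset)
  ultimately have "((f \<circ> X) has_vector_derivative
      (\<Sum>i\<in>UNIV. (a + (g' - a$j) *\<^sub>R axis j 1)$i * P i)) (at 1 within {1..})"
    by (rule vector_derivative_diff_chain_within)
  moreover have "(\<Sum>i\<in>UNIV. (a + (g' - a$j) *\<^sub>R axis j 1)$i * P i)
      = (\<Sum>i\<in>UNIV. a$i * P i) + (g' - a$j) * P j"
  proof -
    have "(a + (g' - a$j) *\<^sub>R axis j 1)$i * P i = a$i * P i + (if i = j then (g' - a$j) * P j else 0)" for i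
      by (simp add: axis_def algebra_simps)
    then show ?thesis by (simp add: sum.distrib)
  qed
  ultimately have "((\<lambda>v. f (X v)) has_real_derivative (\<Sum>i\<in>UNIV. a$i * P i) + (g' - a$j) * P j)
      (at 1 within {1..})"
    by (simp add: o_def has_real_derivative_iff_has_vector_derivative)
  moreover have "((\<lambda>v. f (X v)) has_real_derivative 0) (at 1 within {1..})"
    by (rule has_field_derivative_transform_within[OF DERIV_const zero_less_one]) (use fX in auto)
  moreover have "at (1::real) within {1..} \<noteq> bot"
    by (simp add: at_within_Ici_at_right)
  ultimately show ?thesis
    by (rule has_field_derivative_unique)
qed

lemma smooth_real_on_continuous_on:
  assumes "smooth_real_on S g"
  shows "continuous_on S g"
proof -
  obtain D where "D 0 = g" "\<And>k x. x \<in> S \<Longrightarrow> (D k has_real_derivative D (Suc k) x) (at x within S)"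
    using assms unfolding smooth_real_on_def by blast
  then show ?thesis using DERIV_continuous_on by metis
qed

lemma smooth_real_on_quadratic_bound:
  assumes "smooth_real_on {a..} g"
  obtains g' M where "(g has_real_derivative g') (at a within {a..})" "0 \<le> M"
    "\<And>u. 0 \<le> u \<Longrightarrow> u \<le> 1 \<Longrightarrow> \<bar>g (a + u) - g a - g' * u\<bar> \<le> M * u\<^sup>2"
proof -
  obtain D where D: "D 0 = g"
    and der: "\<And>k x. x \<in> {a..} \<Longrightarrow> (D k has_real_derivative D (Suc k) x) (at x within {a..})"
    using assms unfolding smooth_real_on_def by blast
  have "compact (D 2 ` {a..a+1})"
    by (intro compact_continuous_image continuous_on_subset[OF DERIV_continuous_on[OF der]]) auto
  then obtain M where "M > 0" and M: "\<And>x. x \<in> {a..a+1} \<Longrightarrow> \<bar>D 2 x\<bar> \<le> M"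
    using compact_imp_bounded bounded_pos by (metis image_eqI real_norm_def)
  have "\<bar>g (a + u) - g a - D 1 a * u\<bar> \<le> M * u\<^sup>2" if "0 \<le> u" "u \<le> 1" for u
  proof -
    have "norm (D 0 (a + u) - (\<Sum>i\<le>1. D i a * (a + u - a) ^ i / fact i)) \<le> M * norm (a + u - a) ^ Suc 1 / fact 1"
    proof (rule field_Taylor[where S = "{a..a+1}"])
      show "(D i has_real_derivative D (Suc i) x) (at x within {a..a+1})" if "x \<in> {a..a+1}" for i x
        using der[of x i] that by (auto intro: has_field_derivative_subset)
      show "norm (D (Suc 1) x) \<le> M" if "x \<in> {a..a+1}" for x
        using M[OF that] by (simp add: numeral_2_eq_2)
    qed (use that in auto)
    then show ?thesis by (simp add: D power2_eq_square)
  qed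
  moreover have "(g has_real_derivative D 1 a) (at a within {a..})"
    using der[of a 0] D by simp
  ultimately show ?thesis using that[of "D 1 a" M] \<open>M > 0\<close> by auto
qed

lemma DERIV_le_neg_div_imp_log_bound:
  fixes w w' :: "real \<Rightarrow> real"
  assumes "0 < s0"
    and der: "\<And>x. s0 \<le> x \<Longrightarrow> (w has_real_derivative w' x) (at x)"
    and le: "\<And>x. s0 \<le> x \<Longrightarrow> w' x \<le> - c / x"
    and "s0 \<le> s"
  shows "w s \<le> w s0 - c * ln (s / s0)"
proof -
  have "w s + c * ln s \<le> w s0 + c * ln s0"
  proof (rule DERIV_nonpos_imp_nonincreasing[OF \<open>s0 \<le> s\<close>])
    fix x assume "s0 \<le> x" "x \<le> s"
    then have "0 < x" using \<open>0 < s0\<close> by simp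
    have "((\<lambda>x. w x + c * ln x) has_real_derivative w' x + c * inverse x) (at x)"
      using der[OF \<open>s0 \<le> x\<close>] \<open>0 < x\<close> by (auto intro!: derivative_eq_intros simp: divide_inverse)
    moreover have "w' x + c * inverse x \<le> 0"
      using le[OF \<open>s0 \<le> x\<close>] by (simp add: divide_inverse)
    ultimately show "\<exists>y. ((\<lambda>x. w x + c * ln x) has_real_derivative y) (at x) \<and> y \<le> 0"
      by blast
  qed
  then show ?thesis
    using \<open>0 < s0\<close> \<open>s0 \<le> s\<close> by (simp add: ln_div algebra_simps)
qed

text \<open>The quantity \<open>s powr \<alpha> * u / (1 - k * u)\<close> is constant along solutions of the
  comparison equation \<open>u' = - \<alpha> * u * (1 - k * u) / s\<close>, and non-increasing along subsolutions.\<close>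
lemma logistic_subsolution_power_decay:
  fixes u u' :: "real \<Rightarrow> real"
  assumes "0 < s1" "0 \<le> k"
    and der: "\<And>x. s1 \<le> x \<Longrightarrow> (u has_real_derivative u' x) (at x)"
    and sub: "\<And>x. s1 \<le> x \<Longrightarrow> u' x \<le> - \<alpha> * u x * (1 - k * u x) / x"
    and nonneg: "\<And>x. s1 \<le> x \<Longrightarrow> 0 \<le> u x"
    and small: "\<And>x. s1 \<le> x \<Longrightarrow> k * u x < 1"
    and "s1 \<le> s"
  shows "u s \<le> s1 powr \<alpha> * u s1 / (1 - k * u s1) * s powr - \<alpha>"
proof -
  define P where "P x = x powr \<alpha> * u x / (1 - k * u x)" for x
  have "P s \<le> P s1"
  proof (rule DERIV_nonpos_imp_nonincreasing[OF \<open>s1 \<le> s\<close>])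
    fix x assume "s1 \<le> x" "x \<le> s"
    then have "0 < x" using \<open>0 < s1\<close> by simp
    define d where "d = 1 - k * u x"
    have "0 < d" using small[OF \<open>s1 \<le> x\<close>] by (simp add: d_def)
    have "(P has_real_derivative
        ((\<alpha> * x powr (\<alpha> - 1) * u x + x powr \<alpha> * u' x) * d - x powr \<alpha> * u x * - (k * u' x)) / d\<^sup>2) (at x)"
      unfolding P_def d_def
      using DERIV_divide[OF DERIV_mult[OF has_real_derivative_powr[OF \<open>0 < x\<close>] der[OF \<open>s1 \<le> x\<close>]]
          DERIV_diff[OF DERIV_const DERIV_cmult[OF der[OF \<open>s1 \<le> x\<close>]]]] \<open>0 < d\<close>
      by (simp add: d_def power2_eq_square mult.commute)
    moreover have "(\<alpha> * x powr (\<alpha> - 1) * u x + x powr \<alpha> * u' x) * d - x powr \<alpha> * u x * - (k * u' x)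
        = x powr (\<alpha> - 1) * (\<alpha> * u x * d + x * u' x)"
      using \<open>0 < x\<close> by (simp add: d_def powr_diff field_simps)
    ultimately have "(P has_real_derivative x powr (\<alpha> - 1) * (\<alpha> * u x * d + x * u' x) / d\<^sup>2) (at x)"
      by simp
    moreover have "\<alpha> * u x * d + x * u' x \<le> 0"
      using sub[OF \<open>s1 \<le> x\<close>] \<open>0 < x\<close> by (simp add: d_def field_simps)
    then have "x powr (\<alpha> - 1) * (\<alpha> * u x * d + x * u' x) / d\<^sup>2 \<le> 0"
      using \<open>0 < d\<close> by (intro divide_nonpos_pos mult_nonneg_nonpos) auto
    ultimately show "\<exists>y. (P has_real_derivative y) (at x) \<and> y \<le> 0"
      by blast
  qed
  have "0 < s" using \<open>0 < s1\<close> \<open>s1 \<le> s\<close> by simp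
  have "u s \<le> u s / (1 - k * u s)"
    using nonneg[OF \<open>s1 \<le> s\<close>] small[OF \<open>s1 \<le> s\<close>] \<open>0 \<le> k\<close>
    by (simp add: le_divide_eq mult_left_le)
  also have "\<dots> = P s * s powr - \<alpha>"
    using \<open>0 < s\<close> by (simp add: P_def powr_minus field_simps)
  also have "\<dots> \<le> P s1 * s powr - \<alpha>"
    using \<open>P s \<le> P s1\<close> by (simp add: mult_right_mono)
  finally show ?thesis by (simp add: P_def)
qed

lemma ode_solution_antimono:
  fixes h w :: "real \<Rightarrow> real"
  assumes "0 < B"
    and h_nonpos: "\<And>v. 1 \<le> v \<Longrightarrow> h v \<le> 0"
    and w_ge: "\<And>s. 1 \<le> s \<Longrightarrow> 1 \<le> w s"
    and w_ode: "\<And>s. 1 < s \<Longrightarrow> (w has_real_derivative h (w s) / (B * s)) (at s)"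
    and "1 < s" "s \<le> t"
  shows "w t \<le> w s"
proof (rule DERIV_nonpos_imp_nonincreasing[OF \<open>s \<le> t\<close>])
  fix x assume "s \<le> x" "x \<le> t"
  then have "1 < x" using \<open>1 < s\<close> by simp
  then have "h (w x) / (B * x) \<le> 0"
    using h_nonpos[OF w_ge] \<open>0 < B\<close> by (simp add: divide_nonpos_pos)
  with w_ode[OF \<open>1 < x\<close>] show "\<exists>y. (w has_real_derivative y) (at x) \<and> y \<le> 0"
    by blast
qed

lemma ode_solution_tendsto:
  fixes h w :: "real \<Rightarrow> real"
  assumes "0 < B"
    and h_cont: "continuous_on {1..} h"
    and h_nonpos: "\<And>v. 1 \<le> v \<Longrightarrow> h v \<le> 0"
    and h_neg: "\<And>v. 1 < v \<Longrightarrow> h v < 0"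
    and w_ge: "\<And>s. 1 \<le> s \<Longrightarrow> 1 \<le> w s"
    and w_ode: "\<And>s. 1 < s \<Longrightarrow> (w has_real_derivative h (w s) / (B * s)) (at s)"
  shows "(w \<longlongrightarrow> 1) at_top"
proof -
  note antimono = ode_solution_antimono[OF \<open>0 < B\<close> h_nonpos w_ge w_ode]
  have eventually_below: "\<forall>\<^sub>F s in at_top. w s \<le> 1 + \<eta>" if "0 < \<eta>" for \<eta>
  proof (rule ccontr)
    assume not_eventually: "\<not> (\<forall>\<^sub>F s in at_top. w s \<le> 1 + \<eta>)"
    have above: "1 + \<eta> < w s" if "2 \<le> s" for s
    proof (rule ccontr)
      assume "\<not> 1 + \<eta> < w s"
      then have "\<forall>t\<ge>s. w t \<le> 1 + \<eta>"
        using antimono[of s] that by force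
      with not_eventually show False
        by (auto simp: eventually_at_top_linorder)
    qed
    text \<open>On the compact range \<open>[1 + \<eta>, w 2]\<close> of \<open>w\<close> over \<open>[2, \<infinity>)\<close>, \<open>h\<close> stays below a negative
      constant, so \<open>w\<close> decreases at least logarithmically and eventually drops below \<open>1\<close>.\<close>
    have "continuous_on {1 + \<eta>..w 2} h"
      by (rule continuous_on_subset[OF h_cont]) (use \<open>0 < \<eta>\<close> in auto)
    then obtain v0 where v0: "v0 \<in> {1 + \<eta>..w 2}" and max: "\<And>v. v \<in> {1 + \<eta>..w 2} \<Longrightarrow> h v \<le> h v0"
      using continuous_attains_sup[of "{1 + \<eta>..w 2}" h] above[of 2] by auto
    define \<mu> where "\<mu> = - h v0"
    have "0 < \<mu>"
      using v0 \<open>0 < \<eta>\<close> h_neg[of v0] by (simp add: \<mu>_def)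
    have log_bound: "w s \<le> w 2 - \<mu> / B * ln (s / 2)" if "2 \<le> s" for s
    proof (rule DERIV_le_neg_div_imp_log_bound[OF _ _ _ that])
      fix x :: real assume "2 \<le> x"
      then show "(w has_real_derivative h (w x) / (B * x)) (at x)"
        by (intro w_ode) simp
      have "h (w x) \<le> - \<mu>"
        using max[of "w x"] above[OF \<open>2 \<le> x\<close>] antimono[of 2 x] \<open>2 \<le> x\<close> by (simp add: \<mu>_def)
      then show "h (w x) / (B * x) \<le> - (\<mu> / B) / x"
        using \<open>0 < B\<close> \<open>2 \<le> x\<close> by (simp add: field_simps)
    qed simp
    define s where "s = 2 * exp (B * w 2 / \<mu>)"
    have "2 \<le> s"
      using \<open>0 < B\<close> \<open>0 < \<mu>\<close> w_ge[of 2] by (simp add: s_def)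
    have "w s \<le> 0"
      using log_bound[OF \<open>2 \<le> s\<close>] \<open>0 < B\<close> \<open>0 < \<mu>\<close> by (simp add: s_def)
    with w_ge[of s] \<open>2 \<le> s\<close> show False by simp
  qed
  show ?thesis
  proof (rule order_tendstoI)
    show "\<forall>\<^sub>F s in at_top. a < w s" if "a < 1" for a
      using w_ge that by (auto simp: eventually_at_top_linorder intro: less_le_trans)
    show "\<forall>\<^sub>F s in at_top. w s < a" if "1 < a" for a
    proof -
      have "\<forall>\<^sub>F s in at_top. w s \<le> 1 + (a - 1) / 2"
        using eventually_below that by simp
      moreover have "1 + (a - 1) / 2 < a"
        using that by (simp add: field_simps)
      ultimately show ?thesis
        by (auto elim: eventually_mono)
    qed
  qed
qed

lemma ode_solution_power_decay:
  fixes h w :: "real \<Rightarrow> real"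
  assumes "0 < B" "0 < \<alpha>" "0 \<le> M"
    and h_quadratic: "\<And>u. 0 \<le> u \<Longrightarrow> u \<le> 1 \<Longrightarrow> h (1 + u) \<le> - (\<alpha> * B) * u + M * u\<^sup>2"
    and w_ge: "\<And>s. 1 \<le> s \<Longrightarrow> 1 \<le> w s"
    and w_ode: "\<And>s. 1 < s \<Longrightarrow> (w has_real_derivative h (w s) / (B * s)) (at s)"
    and w_lim: "(w \<longlongrightarrow> 1) at_top"
  shows "(\<lambda>s. w s - 1) \<in> O(\<lambda>s. s powr - \<alpha>)"
proof -
  define k where "k = M / (\<alpha> * B)"
  have "0 \<le> k" using assms(1-3) by (simp add: k_def)
  define \<eta> where "\<eta> = 1 / (2 * (k + 1))"
  have \<eta>: "0 < \<eta>" "\<eta> \<le> 1" "k * \<eta> < 1"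
    using \<open>0 \<le> k\<close> by (auto simp: \<eta>_def field_simps)
  obtain s1 where "2 \<le> s1" and s1: "\<And>s. s1 \<le> s \<Longrightarrow> w s < 1 + \<eta>"
    using order_tendstoD(2)[OF w_lim, of "1 + \<eta>"] \<open>0 < \<eta>\<close>
    by (auto simp: eventually_at_top_linorder) (metis max.cobounded1 max.cobounded2 order_trans)
  have u_small: "0 \<le> w x - 1" "w x - 1 \<le> 1" "k * (w x - 1) < 1" if "s1 \<le> x" for x
  proof -
    show "0 \<le> w x - 1" "w x - 1 \<le> 1" using w_ge[of x] s1[OF that] \<open>2 \<le> s1\<close> that \<eta> by auto
    have "k * (w x - 1) \<le> k * \<eta>"
      using s1[OF that] \<open>0 \<le> k\<close> by (intro mult_left_mono) auto
    with \<eta> show "k * (w x - 1) < 1" by linarith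
  qed
  define C where "C = s1 powr \<alpha> * (w s1 - 1) / (1 - k * (w s1 - 1))"
  have bound: "w s - 1 \<le> C * s powr - \<alpha>" if "s1 \<le> s" for s
    unfolding C_def
  proof (rule logistic_subsolution_power_decay[where u = "\<lambda>s. w s - 1" and u' = "\<lambda>x. h (w x) / (B * x)",
        OF _ \<open>0 \<le> k\<close> _ _ u_small(1) u_small(3) that])
    fix x assume "s1 \<le> x"
    then show "((\<lambda>s. w s - 1) has_real_derivative h (w x) / (B * x)) (at x)"
      using \<open>2 \<le> s1\<close> by (auto intro!: derivative_eq_intros w_ode)
    have "h (w x) \<le> - (\<alpha> * B) * (w x - 1) + M * (w x - 1)\<^sup>2"
      using h_quadratic[OF u_small(1,2)[OF \<open>s1 \<le> x\<close>]] by simp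
    also have "\<dots> = B * (- \<alpha> * (w x - 1) * (1 - k * (w x - 1)))"
      using assms(1,2) by (simp add: k_def power2_eq_square field_simps)
    finally show "h (w x) / (B * x) \<le> - \<alpha> * (w x - 1) * (1 - k * (w x - 1)) / x"
      using \<open>0 < B\<close> \<open>s1 \<le> x\<close> \<open>2 \<le> s1\<close> by (simp add: field_simps)
  qed (use \<open>2 \<le> s1\<close> in auto)
  have "\<forall>\<^sub>F s in at_top. norm (w s - 1) \<le> C * norm (s powr - \<alpha>)"
    unfolding eventually_at_top_linorder using bound u_small(1) by (intro exI[of _ s1]) auto
  then show ?thesis by (rule bigoI)
qed

lemma ode_solution_asymptotics:
  fixes h w :: "real \<Rightarrow> real"
  assumes "0 < B" "0 < \<alpha>" "0 \<le> M"
    and h_cont: "continuous_on {1..} h"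
    and h_neg: "\<And>v. 1 < v \<Longrightarrow> h v < 0"
    and h_quadratic: "\<And>u. 0 \<le> u \<Longrightarrow> u \<le> 1 \<Longrightarrow> h (1 + u) \<le> - (\<alpha> * B) * u + M * u\<^sup>2"
    and w_ge: "\<And>s. 1 \<le> s \<Longrightarrow> 1 \<le> w s"
    and w_ode: "\<And>s. 1 < s \<Longrightarrow> (w has_real_derivative h (w s) / (B * s)) (at s)"
  shows "(w \<longlongrightarrow> 1) at_top \<and> (\<lambda>s. w s - 1) \<in> O(\<lambda>s. s powr - \<alpha>)"
proof
  have "h v \<le> 0" if "1 \<le> v" for v
    using that h_neg[of v] h_quadratic[of 0] by (cases "v = 1") auto
  then show "(w \<longlongrightarrow> 1) at_top"
    using ode_solution_tendsto[OF \<open>0 < B\<close> h_cont _ h_neg w_ge w_ode] by blast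
  then show "(\<lambda>s. w s - 1) \<in> O(\<lambda>s. s powr - \<alpha>)"
    using ode_solution_power_decay[OF assms(1-3) h_quadratic w_ge w_ode] by blast
qed

theorem lemma2p4:
  fixes \<Gamma> :: "(real ^ 'n::{finite,wellorder}) set"
    and f :: "real ^ 'n::{finite,wellorder} \<Rightarrow> real"
    and a :: "real ^ 'n::{finite,wellorder}"
    and g :: "real \<Rightarrow> real"
    and w :: "real \<Rightarrow> real"
    and c2 \<delta> :: real
  assumes Gamma_open: "open \<Gamma>"
    and Gamma_convex: "convex \<Gamma>"
    and Gamma_cone: "\<forall>x\<in>\<Gamma>. \<forall>t>0. t *\<^sub>R x \<in> \<Gamma>"
    and Gamma_proper: "\<Gamma> \<noteq> UNIV"
    and Gamma_pos: "{x. \<forall>i. x $ i > 0} \<subseteq> \<Gamma>"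
    and Gamma_sum: "\<Gamma> \<subseteq> {x. (\<Sum>i\<in>UNIV. x $ i) > 0}"
    and f_smooth: "smooth_on \<Gamma> f"
    and f_sym: "\<forall>\<sigma>. \<sigma> permutes (UNIV :: 'n set) \<longrightarrow>
                  (\<forall>x\<in>\<Gamma>. permute_vec \<sigma> x \<in> \<Gamma> \<and> f (permute_vec \<sigma> x) = f x)"
    and f_incr: "\<forall>x\<in>\<Gamma>. \<forall>i. pdiff f i x > 0"
    and f_norm: "\<exists>astar>0. f (astar *\<^sub>R (\<chi> i. 1)) = 1"
    and f_bdry: "\<forall>l0\<in>frontier \<Gamma>. Limsup (at l0 within \<Gamma>) (\<lambda>x. ereal (f x)) < 1"
    and a_A: "in_calA f a"
    and a_sorted: "\<forall>i j. i \<le> j \<longrightarrow> a $ i \<le> a $ j"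
    and a_max1: "pdiff f first_idx a = Max (range (\<lambda>i. pdiff f i a))"
    and g_smooth: "smooth_real_on {1..} g"
    and g_Gamma: "\<forall>v\<ge>1. (\<chi> i. if i = first_idx then g v else a $ i * v) \<in> \<Gamma>"
    and g_level: "\<forall>v\<ge>1. f (\<chi> i. if i = first_idx then g v else a $ i * v) = 1"
    and c2: "c2 > 1"
    and delta: "\<delta> \<ge> 0"
    and alpha: "(\<Sum>i\<in>UNIV. a $ i * pdiff f i a) /
                ((2 * a $ last_idx + \<delta>) * pdiff f first_idx a) > 1"
    and w_range: "\<forall>s\<ge>1. w s \<ge> 1"
    and w_ode: "\<forall>s\<ge>1. (w has_real_derivative
                  (g (w s) - a $ first_idx * w s) / ((2 * a $ last_idx + \<delta>) * s)) (at s within {1..})"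
    and w_init: "w 1 = c2"
  shows "(w \<longlongrightarrow> 1) at_top \<and>
         (\<lambda>s. w s - 1) \<in> O(\<lambda>s. s powr (- ((\<Sum>i\<in>UNIV. a $ i * pdiff f i a) /
                ((2 * a $ last_idx + \<delta>) * pdiff f first_idx a))))"
proof -
  define B where "B = 2 * a $ last_idx + \<delta>"
  define \<alpha> where "\<alpha> = (\<Sum>i\<in>UNIV. a $ i * pdiff f i a) / (B * pdiff f first_idx a)"
  define h where "h v = g v - a $ first_idx * v" for v
  have f_der: "\<And>z. z \<in> \<Gamma> \<Longrightarrow> (f has_derivative (\<lambda>h. \<Sum>i\<in>UNIV. h$i * pdiff f i z)) (at z)"
    by (rule smooth_on_has_derivative[OF Gamma_open f_smooth])
  have f_pos: "\<And>z i. z \<in> \<Gamma> \<Longrightarrow> 0 < pdiff f i z" and a_pos: "\<And>i. 0 < a $ i" and "f a = 1"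
    using f_incr a_A by (auto simp: in_calA_def)
  have ray: "\<And>v. 1 \<le> v \<Longrightarrow> v *\<^sub>R a \<in> \<Gamma>" and "a \<in> \<Gamma>"
    using Gamma_pos a_pos by auto
  have level: "\<And>v. 1 \<le> v \<Longrightarrow> f (\<chi> i. if i = first_idx then g v else a $ i * v) = f a"
    using g_level \<open>f a = 1\<close> by simp
  have g1: "g 1 = a $ first_idx" and g_below: "\<And>v. 1 < v \<Longrightarrow> g v < a $ first_idx * v"
    using level_curve_below_ray[OF Gamma_convex f_der f_pos a_pos ray _ level] g_Gamma by auto
  obtain g' M where g': "(g has_real_derivative g') (at 1 within {1..})" and "0 \<le> M"
    and g_taylor: "\<And>u. 0 \<le> u \<Longrightarrow> u \<le> 1 \<Longrightarrow> \<bar>g (1 + u) - g 1 - g' * u\<bar> \<le> M * u\<^sup>2"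
    using smooth_real_on_quadratic_bound[OF g_smooth] by blast
  have "0 < B"
    using a_pos delta by (simp add: B_def add_pos_nonneg)
  have "0 < \<alpha>"
    using alpha by (simp add: \<alpha>_def B_def)
  have slope: "g' - a $ first_idx = - (\<alpha> * B)"
    using level_curve_tangent[OF f_der[OF \<open>a \<in> \<Gamma>\<close>] g1 g' level] \<open>0 < B\<close> f_pos[OF \<open>a \<in> \<Gamma>\<close>, of first_idx]
    by (simp add: \<alpha>_def field_simps)
  have h_quadratic: "h (1 + u) \<le> - (\<alpha> * B) * u + M * u\<^sup>2" if "0 \<le> u" "u \<le> 1" for u
  proof -
    have "h (1 + u) \<le> (g' - a $ first_idx) * u + M * u\<^sup>2"
      using g_taylor[OF that] g1 by (simp add: h_def algebra_simps abs_le_iff)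
    with slope show ?thesis by simp
  qed
  have h_cont: "continuous_on {1..} h"
    unfolding h_def by (intro continuous_intros smooth_real_on_continuous_on[OF g_smooth])
  have h_neg: "\<And>v. 1 < v \<Longrightarrow> h v < 0"
    using g_below by (simp add: h_def)
  have w_ode': "(w has_real_derivative h (w s) / (B * s)) (at s)" if "1 < s" for s
  proof -
    have "at s within {1..} = at s"
      using that by (intro at_within_interior) auto
    with w_ode[rule_format, of s] that show ?thesis by (simp add: h_def B_def)
  qed
  have "(w \<longlongrightarrow> 1) at_top \<and> (\<lambda>s. w s - 1) \<in> O(\<lambda>s. s powr - \<alpha>)"
    by (rule ode_solution_asymptotics[OF \<open>0 < B\<close> \<open>0 < \<alpha>\<close> \<open>0 \<le> M\<close> h_cont h_neg h_quadratic])
       (use w_range w_ode' in auto)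
  then show ?thesis
    by (simp add: \<alpha>_def B_def)
qed

end
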